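(* Let $R,S$ be outer univalent multirelations $X\leftrightarrow\mathcal{P}Y$. Then $R\sqsubseteq_\uparrow S\iff R\Cup S=S$ and $R\sqsubseteq_\downarrow S\iff R\Cap S=R$.
   Context: $R\Cup S=\{(a,A\cup B)\mid (a,A)\in R,(a,B)\in S\}$, $R\Cap S=\{(a,A\cap B)\mid (a,A)\in R,(a,B)\in S\}$. $R^{\uparrow}=\{(a,A)\mid\exists B.(a,B)\in R\wedge B\subseteq A\}$, $R^{\downarrow}=\{(a,A)\mid\exists B.(a,B)\in R\wedge A\subseteq B\}$; $R\sqsubseteq_\uparrow S\iff S\subseteq R^{\uparrow}$; $R\sqsubseteq_\downarrow S\iff R\subseteq S^{\downarrow}$. $R$ is outer univalent if for each $a\in X$ there is at most one $B$ with $(a,B)\in R$. *)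

theory Defs
  imports Main
begin

definition inner_union :: "('a \<times> 'b set) set \<Rightarrow> ('a \<times> 'b set) set \<Rightarrow> ('a \<times> 'b set) set" where
  "inner_union R S = {(a, A \<union> B) | a A B. (a, A) \<in> R \<and> (a, B) \<in> S}"

definition inner_inter :: "('a \<times> 'b set) set \<Rightarrow> ('a \<times> 'b set) set \<Rightarrow> ('a \<times> 'b set) set" where
  "inner_inter R S = {(a, A \<inter> B) | a A B. (a, A) \<in> R \<and> (a, B) \<in> S}"

definition up_closure :: "('a \<times> 'b set) set \<Rightarrow> ('a \<times> 'b set) set" where
  "up_closure R = {(a, A). \<exists>B. (a, B) \<in> R \<and> B \<subseteq> A}"

definition down_closure :: "('a \<times> 'b set) set \<Rightarrow> ('a \<times> 'b set) set" where
  "down_closure R = {(a, A). \<exists>B. (a, B) \<in> R \<and> A \<subseteq> B}"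

definition up_le :: "('a \<times> 'b set) set \<Rightarrow> ('a \<times> 'b set) set \<Rightarrow> bool" where
  "up_le R S \<longleftrightarrow> S \<subseteq> up_closure R"

definition down_le :: "('a \<times> 'b set) set \<Rightarrow> ('a \<times> 'b set) set \<Rightarrow> bool" where
  "down_le R S \<longleftrightarrow> R \<subseteq> down_closure S"

definition outer_univalent :: "('a \<times> 'b set) set \<Rightarrow> bool" where
  "outer_univalent R \<longleftrightarrow> (\<forall>a B C. (a, B) \<in> R \<longrightarrow> (a, C) \<in> R \<longrightarrow> B = C)"

end

theory Submission
  imports Defs
begin

text \<open>Under \<open>R \<sqsubseteq>\<^sub>\<up> S\<close>, each image set of \<open>S\<close> contains some image set of \<open>R\<close> at the same point;
  if \<open>R\<close> is outer univalent, that is the only image set of \<open>R\<close> there, so forming \<open>R \<Cup> S\<close> leaves \<open>S\<close>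
  unchanged. Conversely \<open>R \<Cup> S\<close> always lies in the up-closure of \<open>R\<close>. The statement for \<open>\<sqsubseteq>\<^sub>\<down>\<close>
  and \<open>\<Cap>\<close> is the order dual, with outer univalence of \<open>S\<close>.\<close>

lemma outer_univalentD: "outer_univalent R \<Longrightarrow> (a, B) \<in> R \<Longrightarrow> (a, C) \<in> R \<Longrightarrow> B = C"
  unfolding outer_univalent_def by blast

lemma inner_union_subset_up_closure: "inner_union R S \<subseteq> up_closure R"
  unfolding inner_union_def up_closure_def by blast

lemma inner_inter_subset_down_closure: "inner_inter R S \<subseteq> down_closure S"
  unfolding inner_inter_def down_closure_def by blast

lemma up_le_imp_subset_inner_union:
  assumes "up_le R S"
  shows "S \<subseteq> inner_union R S"
proof
  fix p assume "p \<in> S"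
  then obtain a B where p: "p = (a, B)" "(a, B) \<in> S" by (cases p) auto
  with assms obtain C where "(a, C) \<in> R" "C \<subseteq> B"
    unfolding up_le_def up_closure_def by blast
  then have "(a, C \<union> B) \<in> inner_union R S"
    using p(2) unfolding inner_union_def by blast
  with \<open>C \<subseteq> B\<close> show "p \<in> inner_union R S" by (simp add: p(1) Un_absorb1)
qed

lemma down_le_imp_subset_inner_inter:
  assumes "down_le R S"
  shows "R \<subseteq> inner_inter R S"
proof
  fix p assume "p \<in> R"
  then obtain a A where p: "p = (a, A)" "(a, A) \<in> R" by (cases p) auto
  with assms obtain C where "(a, C) \<in> S" "A \<subseteq> C"
    unfolding down_le_def down_closure_def by blast
  then have "(a, A \<inter> C) \<in> inner_inter R S"
    using p(2) unfolding inner_inter_def by blast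
  with \<open>A \<subseteq> C\<close> show "p \<in> inner_inter R S" by (simp add: p(1) Int_absorb2)
qed

lemma up_le_outer_univalent_subset:
  assumes "outer_univalent R" "up_le R S" "(a, A) \<in> R" "(a, B) \<in> S"
  shows "A \<subseteq> B"
proof -
  from assms(2,4) obtain C where "(a, C) \<in> R" "C \<subseteq> B"
    unfolding up_le_def up_closure_def by blast
  with outer_univalentD[OF assms(1) assms(3)] show ?thesis by blast
qed

lemma down_le_outer_univalent_subset:
  assumes "outer_univalent S" "down_le R S" "(a, A) \<in> R" "(a, B) \<in> S"
  shows "A \<subseteq> B"
proof -
  from assms(2,3) obtain C where "(a, C) \<in> S" "A \<subseteq> C"
    unfolding down_le_def down_closure_def by blast
  with outer_univalentD[OF assms(1) assms(4)] show ?thesis by blast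
qed

lemma inner_union_subset_if_up_le:
  assumes "outer_univalent R" "up_le R S"
  shows "inner_union R S \<subseteq> S"
  using up_le_outer_univalent_subset[OF assms] unfolding inner_union_def
  by (auto simp: Un_absorb1)

lemma inner_inter_subset_if_down_le:
  assumes "outer_univalent S" "down_le R S"
  shows "inner_inter R S \<subseteq> R"
  using down_le_outer_univalent_subset[OF assms] unfolding inner_inter_def
  by (auto simp: Int_absorb2)

lemma up_le_iff_inner_union_eq:
  assumes "outer_univalent R"
  shows "up_le R S \<longleftrightarrow> inner_union R S = S"
proof
  assume "up_le R S"
  with assms show "inner_union R S = S"
    using inner_union_subset_if_up_le up_le_imp_subset_inner_union by blast
next
  assume "inner_union R S = S"
  then show "up_le R S"
    using inner_union_subset_up_closure unfolding up_le_def by metis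
qed

lemma down_le_iff_inner_inter_eq:
  assumes "outer_univalent S"
  shows "down_le R S \<longleftrightarrow> inner_inter R S = R"
proof
  assume "down_le R S"
  with assms show "inner_inter R S = R"
    using inner_inter_subset_if_down_le down_le_imp_subset_inner_inter by blast
next
  assume "inner_inter R S = R"
  then show "down_le R S"
    using inner_inter_subset_down_closure unfolding down_le_def by metis
qed

theorem lemma5p9:
  fixes R S :: "('a \<times> 'b set) set"
  assumes "outer_univalent R" and "outer_univalent S"
  shows "(up_le R S \<longleftrightarrow> inner_union R S = S) \<and> (down_le R S \<longleftrightarrow> inner_inter R S = R)"
  using up_le_iff_inner_union_eq[OF assms(1)] down_le_iff_inner_inter_eq[OF assms(2)] by blast

end
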